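(* Let $c$ be a natural number and let $\phi$ be a function that assigns to every $m$-input/$m$-output conditional distribution $p(y^{(1)},\dots,y^{(m)}\mid x^{(1)},\dots,x^{(m)})$ on finite sets, together with a set $\Psi$ of distributions on its input alphabet $\mathcal{X}^{(1)}\times\cdots\times\mathcal{X}^{(m)}$, a subset $\phi(p,\Psi)\subseteq\mathbb{R}_+^c$, and suppose $\phi$ satisfies: (1) If $p(y^{(1)}y'^{(1)},\dots,y^{(m)}y'^{(m)}\mid x^{(1)},\dots,x^{(m)})=p(y^{(1)},\dots,y^{(m)}\mid x^{(1)},\dots,x^{(m)})\,p(y'^{(1)},\dots,y'^{(m)}\mid x'^{(1)},\dots,x'^{(m)})$ where each $x'^{(i)}\in\mathcal{X}'^{(i)}$ is a deterministic function of $y^{(i)}$, then for every input distribution $q(x^{(1)},\dots,x^{(m)})$ and every set $\Psi$ of distributions on $\mathcal{X}'^{(1)}\times\cdots\times\mathcal{X}'^{(m)}$ containing the distribution of $(X'^{(1)},\dots,X'^{(m)})$ induced by $q$ and $p(y\mid x)$, \[\phi\big(p(y^{(1)}y'^{(1)},\dots,y^{(m)}y'^{(m)}\mid x),\{q\}\big)\subseteq\phi\big(p(y\mid x),\{q\}\big)\oplus\phi\big(p(y'\mid x'),\Psi\big);\] (2) If $p(y^{(1)},\dots,y^{(m)}\mid x^{(1)},\dots,x^{(m)})=\prod_{i=1}^m\mathbf{1}[y^{(i)}=x^{(i)}]$, then $\phi(p,\{q\})=\{0\}$ for every input distribution $q$; (3) If $p(z^{(1)},\dots,z^{(m)},y^{(1)},\dots,y^{(m)}\mid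 x)=p(y^{(1)},\dots,y^{(m)}\mid x)\prod_{i=1}^m p(z^{(i)}\mid y^{(i)})$, then for every input distribution $q$, $\phi(p(z^{(1)},\dots,z^{(m)}\mid x),\{q\})\subseteq\phi(p(y^{(1)},\dots,y^{(m)}\mid x),\{q\})$. Then for every multiterminal network $q(y^{(1)},\dots,y^{(m)}\mid x^{(1)},\dots,x^{(m)})$, every source $p(w^{(1)},\dots,w^{(m)})$, functions $f^{(i)}$, distortion functions $\Delta^{(i)}$ and levels $D^{(i)}$, every $\epsilon>0$, every $(n)$-code with $\mathbb{E}[\Delta^{(i)}_n(\widehat{M}^{(i)}_{1:n},M^{(i)}_{1:n})]\le D^{(i)}+\epsilon$ for all $i\in[m]$, and every permissible set $\Psi$ of input distributions, \[ \phi\Big(p(\widehat{m}^{(1)}_{1:n},\dots,\widehat{m}^{(m)}_{1:n}\mid w^{(1)}_{1:n},\dots,w^{(m)}_{1:n}),\ \{p(w^{(1)}_{1:n},\dots,w^{(m)}_{1:n})\}\Big)\subseteq n\times\mathrm{ConvexHull}\Big(\phi\big(q(y^{(1)},\dots,y^{(m)}\mid x^{(1)},\dots,x^{(m)}),\Psi\big)\Big), \] where $W^{(i)}_{1:n}$ are the source blocks observed at the nodes and $\widehat{M}^{(i)}_{1:n}=\vartheta^{(i)}(W^{(i)}_{1:n},Y^{(i)}_{1:n})$ are the reconstructions produced by the code.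
   Context: All alphabets are finite; $[k]=\{1,\dots,k\}$. For $K,L\subseteq\mathbb{R}_+^c$, $K\oplus L=\{v_1+v_2:v_1\in K,v_2\in L\}$ (Minkowski sum) and $r\times K=\{rv:v\in K\}$. A GMN is a conditional distribution $q(y^{(1)},\dots,y^{(m)}\mid x^{(1)},\dots,x^{(m)})$. Node $i$ observes i.i.d. repetitions of $W^{(i)}$, jointly distributed as $p(w^{(1)},\dots,w^{(m)})$, and wants $M^{(i)}=f^{(i)}(W^{(1)},\dots,W^{(m)})$; $\Delta^{(i)}$ is a distortion function with $\Delta^{(i)}(a,a)=0$ and $\Delta^{(i)}_n(m_{1:n},m'_{1:n})=\frac1n\sum_k\Delta^{(i)}(m_k,m'_k)$. An $(n)$-code consists of encoders $\zeta^{(i)}_1:(\mathcal{W}^{(i)})^n\to\mathcal{X}^{(i)}$, $\zeta^{(i)}_k:(\mathcal{W}^{(i)})^n\times(\mathcal{Y}^{(i)})^{k-1}\to\mathcal{X}^{(i)}$ ($2\le k\le n$) and decoders $\vartheta^{(i)}:(\mathcal{W}^{(i)})^n\times(\mathcal{Y}^{(i)})^n\to(\mathcal{M}^{(i)})^n$. In operation, the source letters are i.i.d. across time, $X^{(i)}_k=\zeta^{(i)}_k(W^{(i)}_{1:n},Y^{(i)}_{1:k-1})$, and given all past variables and the current inputs, $(Y^{(1)}_k,\dots,Y^{(m)}_k)$ is drawn from $q(\cdot\mid X^{(1)}_k,\dots,X^{(m)}_k)$; $M^{(i)}_k=f^{(i)}(W^{(1)}_k,\dots,W^{(m)}_k)$.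 A permissible set $\Psi$ is a set of joint distributions on $\mathcal{X}^{(1)}\times\cdots\times\mathcal{X}^{(m)}$ that, for the given network and source, contains the joint distribution of the channel inputs $(X^{(1)}_k,\dots,X^{(m)}_k)$ at every time $k$ for any code. *)

theory Defs
  imports "HOL-Probability.Probability"
begin

text \<open>Universal symbol type: every finite alphabet is a finite subset of sym.
  Pairs of symbols and blocks (lists) of symbols are again symbols.\<close>
datatype sym = Atom nat | SPair sym sym | SList "sym list"

fun sfst :: "sym \<Rightarrow> sym" where "sfst (SPair a b) = a" | "sfst _ = Atom 0"
fun ssnd :: "sym \<Rightarrow> sym" where "ssnd (SPair a b) = b" | "ssnd _ = Atom 0"
fun unSList :: "sym \<Rightarrow> sym list" where "unSList (SList l) = l" | "unSList _ = []"

text \<open>Tuples (x^(1),...,x^(m)) are indexed by {..<m} (i.e. node i+1 is index i).\<close>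
definition tup :: "nat \<Rightarrow> (nat \<Rightarrow> sym set) \<Rightarrow> (nat \<Rightarrow> sym) set" where
  "tup m A = PiE {..<m} A"

record chan =
  inA  :: "nat \<Rightarrow> sym set"
  outA :: "nat \<Rightarrow> sym set"
  ker  :: "(nat \<Rightarrow> sym) \<Rightarrow> (nat \<Rightarrow> sym) \<Rightarrow> real"

definition alph :: "nat \<Rightarrow> (nat \<Rightarrow> sym set) \<Rightarrow> bool" where
  "alph m A \<longleftrightarrow> (\<forall>i<m. finite (A i) \<and> A i \<noteq> {}) \<and> (\<forall>i\<ge>m. A i = {})"

definition wf_chan :: "nat \<Rightarrow> chan \<Rightarrow> bool" where
  "wf_chan m C \<longleftrightarrow> alph m (inA C) \<and> alph m (outA C) \<and>
     (\<forall>x y. 0 \<le> ker C x y) \<and>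
     (\<forall>x y. ker C x y \<noteq> 0 \<longrightarrow> x \<in> tup m (inA C) \<and> y \<in> tup m (outA C)) \<and>
     (\<forall>x\<in>tup m (inA C). (\<Sum>y\<in>tup m (outA C). ker C x y) = 1)"

definition dist_on :: "nat \<Rightarrow> (nat \<Rightarrow> sym set) \<Rightarrow> (nat \<Rightarrow> sym) pmf \<Rightarrow> bool" where
  "dist_on m A q \<longleftrightarrow> set_pmf q \<subseteq> tup m A"

definition outp :: "chan \<Rightarrow> (nat \<Rightarrow> sym) \<Rightarrow> (nat \<Rightarrow> sym) pmf" where
  "outp C x = embed_pmf (ker C x)"

definition msum :: "('a::real_vector) set \<Rightarrow> 'a set \<Rightarrow> 'a set" where
  "msum K L = {v1 + v2 | v1 v2. v1 \<in> K \<and> v2 \<in> L}"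

definition rtimes :: "real \<Rightarrow> ('a::real_vector) set \<Rightarrow> 'a set" where
  "rtimes r K = (\<lambda>v. r *\<^sub>R v) ` K"

text \<open>Property (1): channel p(y y'|x) = p(y|x) p(y'|x'), x'^(i) = g i (y^(i)).\<close>
definition pair_ch :: "nat \<Rightarrow> chan \<Rightarrow> (nat \<Rightarrow> sym \<Rightarrow> sym) \<Rightarrow> chan \<Rightarrow> chan" where
  "pair_ch m C1 g C2 =
    (let YY = (\<lambda>i. if i < m then {SPair a b | a b. a \<in> outA C1 i \<and> b \<in> outA C2 i} else {})
     in \<lparr> inA = inA C1, outA = YY,
          ker = (\<lambda>x yy. if x \<in> tup m (inA C1) \<and> yy \<in> tup m YY then
                   ker C1 x (restrict (\<lambda>i. sfst (yy i)) {..<m}) *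
                   ker C2 (restrict (\<lambda>i. g i (sfst (yy i))) {..<m}) (restrict (\<lambda>i. ssnd (yy i)) {..<m})
                 else 0) \<rparr>)"

definition induced :: "nat \<Rightarrow> chan \<Rightarrow> (nat \<Rightarrow> sym \<Rightarrow> sym) \<Rightarrow> (nat \<Rightarrow> sym) pmf \<Rightarrow> (nat \<Rightarrow> sym) pmf" where
  "induced m C1 g q = bind_pmf q (\<lambda>x. map_pmf (\<lambda>y. restrict (\<lambda>i. g i (y i)) {..<m}) (outp C1 x))"

definition id_ch :: "nat \<Rightarrow> (nat \<Rightarrow> sym set) \<Rightarrow> chan" where
  "id_ch m A = \<lparr> inA = A, outA = A, ker = (\<lambda>x y. if x \<in> tup m A \<and> y = x then 1 else 0) \<rparr>"

definition post_ch :: "nat \<Rightarrow> chan \<Rightarrow> (nat \<Rightarrow> sym set) \<Rightarrow> (nat \<Rightarrow> sym \<Rightarrow> sym \<Rightarrow> real) \<Rightarrow> chan" where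
  "post_ch m C Z T = \<lparr> inA = inA C, outA = Z,
     ker = (\<lambda>x z. if x \<in> tup m (inA C) \<and> z \<in> tup m Z then
              (\<Sum>y\<in>tup m (outA C). ker C x y * (\<Prod>i<m. T i (y i) (z i))) else 0) \<rparr>"

definition local_chans :: "nat \<Rightarrow> (nat \<Rightarrow> sym set) \<Rightarrow> (nat \<Rightarrow> sym set) \<Rightarrow> (nat \<Rightarrow> sym \<Rightarrow> sym \<Rightarrow> real) \<Rightarrow> bool" where
  "local_chans m Y Z T \<longleftrightarrow> (\<forall>i<m. \<forall>y\<in>Y i. (\<forall>z. 0 \<le> T i y z) \<and> (\<Sum>z\<in>Z i. T i y z) = 1)"

text \<open>Operation of an (n)-code.  Encoder: zeta i k wblock ypast (time k = 0..n-1,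
  ypast of length k); decoder: theta i wblock yblock.\<close>
definition xin :: "nat \<Rightarrow> (nat \<Rightarrow> nat \<Rightarrow> sym list \<Rightarrow> sym list \<Rightarrow> sym) \<Rightarrow> (nat \<Rightarrow> sym) list
                   \<Rightarrow> (nat \<Rightarrow> sym) list \<Rightarrow> (nat \<Rightarrow> sym)" where
  "xin m \<zeta> ws ys = restrict (\<lambda>i. \<zeta> i (length ys) (map (\<lambda>w. w i) ws) (map (\<lambda>y. y i) ys)) {..<m}"

fun run :: "nat \<Rightarrow> chan \<Rightarrow> (nat \<Rightarrow> nat \<Rightarrow> sym list \<Rightarrow> sym list \<Rightarrow> sym) \<Rightarrow> (nat \<Rightarrow> sym) list
            \<Rightarrow> nat \<Rightarrow> (nat \<Rightarrow> sym) list pmf" where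
  "run m N \<zeta> ws 0 = return_pmf []"
| "run m N \<zeta> ws (Suc k) = bind_pmf (run m N \<zeta> ws k)
      (\<lambda>ys. map_pmf (\<lambda>y. ys @ [y]) (outp N (xin m \<zeta> ws ys)))"

fun iid_pmf :: "'a pmf \<Rightarrow> nat \<Rightarrow> 'a list pmf" where
  "iid_pmf p 0 = return_pmf []"
| "iid_pmf p (Suc n) = bind_pmf (iid_pmf p n) (\<lambda>ws. map_pmf (\<lambda>w. ws @ [w]) p)"

definition joint :: "nat \<Rightarrow> chan \<Rightarrow> (nat \<Rightarrow> sym) pmf \<Rightarrow> nat \<Rightarrow> (nat \<Rightarrow> nat \<Rightarrow> sym list \<Rightarrow> sym list \<Rightarrow> sym)
                     \<Rightarrow> nat \<Rightarrow> ((nat \<Rightarrow> sym) list \<times> (nat \<Rightarrow> sym) list) pmf" where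
  "joint m N pW n \<zeta> k = bind_pmf (iid_pmf pW n) (\<lambda>ws. map_pmf (\<lambda>ys. (ws, ys)) (run m N \<zeta> ws k))"

text \<open>Distribution of the channel inputs (X^(1)_k,...,X^(m)_k) (time k, 0-based).\<close>
definition input_dist :: "nat \<Rightarrow> chan \<Rightarrow> (nat \<Rightarrow> sym) pmf \<Rightarrow> nat \<Rightarrow> (nat \<Rightarrow> nat \<Rightarrow> sym list \<Rightarrow> sym list \<Rightarrow> sym)
                          \<Rightarrow> nat \<Rightarrow> (nat \<Rightarrow> sym) pmf" where
  "input_dist m N pW n \<zeta> k = map_pmf (\<lambda>(ws, ys). xin m \<zeta> ws ys) (joint m N pW n \<zeta> k)"

definition enc_valid :: "nat \<Rightarrow> chan \<Rightarrow> (nat \<Rightarrow> sym set) \<Rightarrow> nat \<Rightarrow> (nat \<Rightarrow> nat \<Rightarrow> sym list \<Rightarrow> sym list \<Rightarrow> sym) \<Rightarrow> bool" where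
  "enc_valid m N W n \<zeta> \<longleftrightarrow> 0 < n \<and> (\<forall>i<m. \<forall>k<n. \<forall>w ys. w \<in> lists (W i) \<and> length w = n \<and>
       ys \<in> lists (outA N i) \<and> length ys = k \<longrightarrow> \<zeta> i k w ys \<in> inA N i)"

definition dec_valid :: "nat \<Rightarrow> chan \<Rightarrow> (nat \<Rightarrow> sym set) \<Rightarrow> (nat \<Rightarrow> sym set) \<Rightarrow> nat
                         \<Rightarrow> (nat \<Rightarrow> sym list \<Rightarrow> sym list \<Rightarrow> sym list) \<Rightarrow> bool" where
  "dec_valid m N W M n \<theta> \<longleftrightarrow> (\<forall>i<m. \<forall>w y. w \<in> lists (W i) \<and> length w = n \<and>
       y \<in> lists (outA N i) \<and> length y = n \<longrightarrow> \<theta> i w y \<in> lists (M i) \<and> length (\<theta> i w y) = n)"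

definition permissible :: "nat \<Rightarrow> chan \<Rightarrow> (nat \<Rightarrow> sym set) \<Rightarrow> (nat \<Rightarrow> sym) pmf \<Rightarrow> (nat \<Rightarrow> sym) pmf set \<Rightarrow> bool" where
  "permissible m N W pW \<Psi> \<longleftrightarrow> (\<forall>q\<in>\<Psi>. dist_on m (inA N) q) \<and>
     (\<forall>n \<zeta>. enc_valid m N W n \<zeta> \<longrightarrow> (\<forall>k<n. input_dist m N pW n \<zeta> k \<in> \<Psi>))"

definition exp_dist :: "nat \<Rightarrow> chan \<Rightarrow> (nat \<Rightarrow> sym) pmf \<Rightarrow> nat \<Rightarrow> (nat \<Rightarrow> nat \<Rightarrow> sym list \<Rightarrow> sym list \<Rightarrow> sym)
     \<Rightarrow> (nat \<Rightarrow> sym list \<Rightarrow> sym list \<Rightarrow> sym list) \<Rightarrow> (nat \<Rightarrow> (nat \<Rightarrow> sym) \<Rightarrow> sym)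
     \<Rightarrow> (nat \<Rightarrow> sym \<Rightarrow> sym \<Rightarrow> real) \<Rightarrow> nat \<Rightarrow> real" where
  "exp_dist m N pW n \<zeta> \<theta> f \<Delta> i = measure_pmf.expectation (joint m N pW n \<zeta> n)
     (\<lambda>(ws, ys). (\<Sum>t<n. \<Delta> i (\<theta> i (map (\<lambda>w. w i) ws) (map (\<lambda>y. y i) ys) ! t) (f i (ws ! t))) / real n)"

text \<open>The block channel p(hat m_{1:n} | w_{1:n}) induced by the code, with block
  alphabets (W^(i))^n and (M^(i))^n encoded as SList symbols.\<close>
definition blk :: "nat \<Rightarrow> (nat \<Rightarrow> sym set) \<Rightarrow> nat \<Rightarrow> nat \<Rightarrow> sym set" where
  "blk m A n = (\<lambda>i. if i < m then {SList l | l. l \<in> lists (A i) \<and> length l = n} else {})"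

definition inblock :: "nat \<Rightarrow> (nat \<Rightarrow> sym) list \<Rightarrow> (nat \<Rightarrow> sym)" where
  "inblock m ws = restrict (\<lambda>i. SList (map (\<lambda>w. w i) ws)) {..<m}"

definition outblock :: "nat \<Rightarrow> (nat \<Rightarrow> sym list \<Rightarrow> sym list \<Rightarrow> sym list) \<Rightarrow> (nat \<Rightarrow> sym) list
                        \<Rightarrow> (nat \<Rightarrow> sym) list \<Rightarrow> (nat \<Rightarrow> sym)" where
  "outblock m \<theta> ws ys = restrict (\<lambda>i. SList (\<theta> i (map (\<lambda>w. w i) ws) (map (\<lambda>y. y i) ys))) {..<m}"

definition unblock :: "nat \<Rightarrow> nat \<Rightarrow> (nat \<Rightarrow> sym) \<Rightarrow> (nat \<Rightarrow> sym) list" where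
  "unblock m n wt = map (\<lambda>t. restrict (\<lambda>i. unSList (wt i) ! t) {..<m}) [0..<n]"

definition block_ch :: "nat \<Rightarrow> chan \<Rightarrow> (nat \<Rightarrow> sym set) \<Rightarrow> (nat \<Rightarrow> sym set) \<Rightarrow> nat
     \<Rightarrow> (nat \<Rightarrow> nat \<Rightarrow> sym list \<Rightarrow> sym list \<Rightarrow> sym) \<Rightarrow> (nat \<Rightarrow> sym list \<Rightarrow> sym list \<Rightarrow> sym list) \<Rightarrow> chan" where
  "block_ch m N W M n \<zeta> \<theta> = \<lparr> inA = blk m W n, outA = blk m M n,
     ker = (\<lambda>wt mt. if wt \<in> tup m (blk m W n) \<and> mt \<in> tup m (blk m M n) then
              pmf (map_pmf (outblock m \<theta> (unblock m n wt)) (run m N \<zeta> (unblock m n wt) n)) mt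
            else 0) \<rparr>"

definition block_src :: "nat \<Rightarrow> (nat \<Rightarrow> sym) pmf \<Rightarrow> nat \<Rightarrow> (nat \<Rightarrow> sym) pmf" where
  "block_src m pW n = map_pmf (inblock m) (iid_pmf pW n)"

end

theory Submission
  imports Defs
begin

text \<open>The block channel of an (n)-code, from the source blocks to the reconstructions, is the
  history channel from W_{1:n} to (W_{1:n}, Y_{1:n}) followed by the decoders acting separately
  at each node, so by property (3) its set is contained in that of the history channel. The
  history channel is built in n steps: after k steps it outputs (W_{1:n}, Y_{1:k}), and the next
  step feeds the encoder outputs X_{k+1}, a deterministic function of each node's history, into
  the network. Property (2) starts this recursion at {0}, and each step adds, by property (1), a
  point of phi(q, Psi): the law of X_{k+1} is the input distribution of the code at that time,
  hence lies in the permissible set Psi. Finally an n-fold sum of points of a set lies in n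
  times its convex hull.\<close>

lemma finite_tup: "alph m A \<Longrightarrow> finite (tup m A)"
  unfolding tup_def alph_def by (auto intro!: finite_PiE)

lemma tupD: "y \<in> tup m A \<Longrightarrow> i < m \<Longrightarrow> y i \<in> A i"
  unfolding tup_def by auto

lemma restrict_in_tup: "(\<And>i. i < m \<Longrightarrow> f i \<in> A i) \<Longrightarrow> restrict f {..<m} \<in> tup m A"
  unfolding tup_def by (simp add: restrict_PiE_iff)

lemma tup_eqI: "y \<in> tup m A \<Longrightarrow> y' \<in> tup m B \<Longrightarrow> (\<And>i. i < m \<Longrightarrow> y i = y' i) \<Longrightarrow> y = y'"
  unfolding tup_def by (metis PiE_arb ext lessThan_iff)

lemma wf_chanD:
  assumes "wf_chan m C"
  shows "alph m (inA C)" "alph m (outA C)" "\<And>x y. 0 \<le> ker C x y"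
    "\<And>x y. ker C x y \<noteq> 0 \<Longrightarrow> x \<in> tup m (inA C)"
    "\<And>x y. ker C x y \<noteq> 0 \<Longrightarrow> y \<in> tup m (outA C)"
    "\<And>x. x \<in> tup m (inA C) \<Longrightarrow> (\<Sum>y\<in>tup m (outA C). ker C x y) = 1"
  using assms unfolding wf_chan_def by blast+

lemma pmf_outp:
  assumes C: "wf_chan m C" and x: "x \<in> tup m (inA C)"
  shows "pmf (outp C x) y = ker C x y"
  unfolding outp_def
proof (rule pmf_embed_pmf)
  show "0 \<le> ker C x y" for y
    using C by (rule wf_chanD)
  have fin: "finite (tup m (outA C))"
    using C by (simp add: finite_tup wf_chanD)
  have "ker C x y = 0" if "y \<notin> tup m (outA C)" for y
    using wf_chanD(5)[OF C] that by blast
  then have "(\<integral>\<^sup>+y. ennreal (ker C x y) \<partial>count_space UNIV) = (\<Sum>y\<in>tup m (outA C). ennreal (ker C x y))"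
    by (intro nn_integral_count_space'[OF fin]) auto
  also have "\<dots> = 1"
    using wf_chanD(3,6)[OF C] x by simp
  finally show "(\<integral>\<^sup>+y. ennreal (ker C x y) \<partial>count_space UNIV) = 1" .
qed

lemma set_pmf_outp:
  assumes C: "wf_chan m C" and x: "x \<in> tup m (inA C)"
  shows "set_pmf (outp C x) \<subseteq> tup m (outA C)"
  using pmf_outp[OF C x] wf_chanD(5)[OF C] by (auto simp: set_pmf_iff)

lemma outp_eq_pmf: "ker C x = pmf p \<Longrightarrow> outp C x = p"
  unfolding outp_def by (simp add: type_definition.Rep_inverse[OF td_pmf_embed_pmf])

lemma wf_chan_pmfI:
  assumes "alph m (inA C)" "alph m (outA C)"
    and supp: "\<And>x y. ker C x y \<noteq> 0 \<Longrightarrow> x \<in> tup m (inA C) \<and> y \<in> tup m (outA C)"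
    and rows: "\<And>x. x \<in> tup m (inA C) \<Longrightarrow> ker C x = pmf (p x)"
  shows "wf_chan m C"
proof -
  have "0 \<le> ker C x y" for x y
    using supp rows by (metis order_refl pmf_nonneg)
  moreover have "(\<Sum>y\<in>tup m (outA C). ker C x y) = 1" if x: "x \<in> tup m (inA C)" for x
  proof -
    have "set_pmf (p x) \<subseteq> tup m (outA C)"
      using supp rows[OF x] by (metis set_pmf_iff subsetI)
    then show ?thesis
      using rows[OF x] by (simp add: sum_pmf_eq_1 finite_tup assms(2))
  qed
  ultimately show ?thesis
    using assms unfolding wf_chan_def by blast
qed

lemma sum_ker_eq_expectation:
  fixes h :: "(nat \<Rightarrow> sym) \<Rightarrow> real"
  assumes C: "wf_chan m C" and x: "x \<in> tup m (inA C)"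
  shows "(\<Sum>y\<in>tup m (outA C). ker C x y * h y) = measure_pmf.expectation (outp C x) h"
proof -
  have "measure_pmf.expectation (outp C x) h = (\<Sum>y\<in>tup m (outA C). pmf (outp C x) y *\<^sub>R h y)"
    using set_pmf_outp[OF C x] by (intro integral_measure_pmf finite_tup wf_chanD(2)[OF C]) auto
  then show ?thesis
    by (simp add: pmf_outp[OF C x])
qed

lemma ker_id_ch_eq_pmf: "x \<in> tup m A \<Longrightarrow> ker (id_ch m A) x = pmf (return_pmf x)"
  by (auto simp: id_ch_def indicator_def)

lemma wf_id_ch: "alph m A \<Longrightarrow> wf_chan m (id_ch m A)"
  by (rule wf_chan_pmfI[where p = return_pmf]) (auto simp: ker_id_ch_eq_pmf id_ch_def split: if_splits)

lemma outp_id_ch: "x \<in> tup m A \<Longrightarrow> outp (id_ch m A) x = return_pmf x"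
  by (intro outp_eq_pmf ker_id_ch_eq_pmf)

subsection \<open>Feeding a function of one channel's output into another channel\<close>

lemma pmf_bind_map_Pair:
  "pmf (bind_pmf p (\<lambda>y. map_pmf (Pair y) (q y))) (a, b) = pmf p a * pmf (q a) b"
proof -
  have "pmf (map_pmf (Pair y) (q y)) (a, b) = pmf (q a) b * indicator {a} y" for y
    by (cases "y = a") (auto intro!: pmf_map_outside pmf_map_inj' injI)
  then show ?thesis
    by (simp add: pmf_bind measure_pmf_single mult.commute)
qed

lemma pmf_map_inj_on:
  "inj_on f A \<Longrightarrow> set_pmf p \<subseteq> A \<Longrightarrow> x \<in> A \<Longrightarrow> pmf (map_pmf f p) (f x) = pmf p x"
  by (metis inj_on_image_mem_iff inj_on_subset pmf_map_inj pmf_map_outside set_pmf_iff)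

definition pair_alph :: "nat \<Rightarrow> (nat \<Rightarrow> sym set) \<Rightarrow> (nat \<Rightarrow> sym set) \<Rightarrow> nat \<Rightarrow> sym set" where
  "pair_alph m A B = (\<lambda>i. if i < m then {SPair a b | a b. a \<in> A i \<and> b \<in> B i} else {})"

definition map_tup :: "nat \<Rightarrow> (nat \<Rightarrow> sym \<Rightarrow> sym) \<Rightarrow> (nat \<Rightarrow> sym) \<Rightarrow> nat \<Rightarrow> sym" where
  "map_tup m g y = restrict (\<lambda>i. g i (y i)) {..<m}"

definition pair_tup :: "nat \<Rightarrow> (nat \<Rightarrow> sym) \<Rightarrow> (nat \<Rightarrow> sym) \<Rightarrow> nat \<Rightarrow> sym" where
  "pair_tup m y y' = restrict (\<lambda>i. SPair (y i) (y' i)) {..<m}"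

definition pair_fst :: "nat \<Rightarrow> (nat \<Rightarrow> sym) \<Rightarrow> nat \<Rightarrow> sym" where
  "pair_fst m yy = restrict (\<lambda>i. sfst (yy i)) {..<m}"

definition pair_snd :: "nat \<Rightarrow> (nat \<Rightarrow> sym) \<Rightarrow> nat \<Rightarrow> sym" where
  "pair_snd m yy = restrict (\<lambda>i. ssnd (yy i)) {..<m}"

lemma inA_pair_ch [simp]: "inA (pair_ch m C1 g C2) = inA C1"
  by (simp add: pair_ch_def Let_def)

lemma outA_pair_ch [simp]: "outA (pair_ch m C1 g C2) = pair_alph m (outA C1) (outA C2)"
  by (simp add: pair_ch_def Let_def pair_alph_def)

lemma ker_pair_ch:
  "ker (pair_ch m C1 g C2) x yy =
    (if x \<in> tup m (inA C1) \<and> yy \<in> tup m (pair_alph m (outA C1) (outA C2))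
     then ker C1 x (pair_fst m yy) * ker C2 (map_tup m g (pair_fst m yy)) (pair_snd m yy) else 0)"
  by (simp add: pair_ch_def Let_def pair_alph_def pair_fst_def pair_snd_def map_tup_def
      cong: restrict_cong)

lemma alph_pair_alph:
  assumes "alph m A" and "alph m B"
  shows "alph m (pair_alph m A B)"
proof -
  have "{SPair a b | a b. a \<in> A i \<and> b \<in> B i} = case_prod SPair ` (A i \<times> B i)" for i
    by auto
  then show ?thesis
    using assms unfolding alph_def pair_alph_def by auto
qed

lemma map_tup_in_tup:
  "(\<forall>i<m. \<forall>a\<in>A i. g i a \<in> B i) \<Longrightarrow> y \<in> tup m A \<Longrightarrow> map_tup m g y \<in> tup m B"
  unfolding map_tup_def by (auto intro!: restrict_in_tup dest: tupD)

lemma pair_tup_in_tup: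
  "y \<in> tup m A \<Longrightarrow> y' \<in> tup m B \<Longrightarrow> pair_tup m y y' \<in> tup m (pair_alph m A B)"
  unfolding pair_tup_def pair_alph_def by (auto intro!: restrict_in_tup dest: tupD)

lemma pair_fst_pair_tup: "y \<in> tup m A \<Longrightarrow> pair_fst m (pair_tup m y y') = y"
  by (rule tup_eqI[of _ m "\<lambda>_. UNIV"]) (auto simp: pair_fst_def pair_tup_def intro: restrict_in_tup)

lemma pair_snd_pair_tup: "y' \<in> tup m B \<Longrightarrow> pair_snd m (pair_tup m y y') = y'"
  by (rule tup_eqI[of _ m "\<lambda>_. UNIV"]) (auto simp: pair_snd_def pair_tup_def intro: restrict_in_tup)

lemma inj_on_pair_tup: "inj_on (\<lambda>(y, y'). pair_tup m y y') (tup m A \<times> tup m B)"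
proof (rule inj_onI, clarify)
  fix y1 y1' y2 y2'
  assume "y1 \<in> tup m A" "y1' \<in> tup m B" "y2 \<in> tup m A" "y2' \<in> tup m B"
    and "pair_tup m y1 y1' = pair_tup m y2 y2'"
  then show "y1 = y2 \<and> y1' = y2'"
    using pair_fst_pair_tup pair_snd_pair_tup by metis
qed

lemma pair_tup_split:
  assumes "yy \<in> tup m (pair_alph m A B)"
  shows "pair_fst m yy \<in> tup m A" "pair_snd m yy \<in> tup m B"
    "pair_tup m (pair_fst m yy) (pair_snd m yy) = yy"
proof -
  have comp: "\<exists>a b. yy i = SPair a b \<and> a \<in> A i \<and> b \<in> B i" if "i < m" for i
    using tupD[OF assms that] that by (auto simp: pair_alph_def)
  show "pair_fst m yy \<in> tup m A" "pair_snd m yy \<in> tup m B"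
    unfolding pair_fst_def pair_snd_def using comp by (force intro!: restrict_in_tup)+
  have "SPair (sfst (yy i)) (ssnd (yy i)) = yy i" if "i < m" for i
    using comp[OF that] by auto
  then show "pair_tup m (pair_fst m yy) (pair_snd m yy) = yy"
    by (intro tup_eqI[OF _ assms, of _ "\<lambda>_. UNIV"])
      (auto simp: pair_tup_def pair_fst_def pair_snd_def intro: restrict_in_tup)
qed

definition pair_outp :: "nat \<Rightarrow> chan \<Rightarrow> (nat \<Rightarrow> sym \<Rightarrow> sym) \<Rightarrow> chan \<Rightarrow> (nat \<Rightarrow> sym) \<Rightarrow> (nat \<Rightarrow> sym) pmf" where
  "pair_outp m C1 g C2 x = map_pmf (\<lambda>(y, y'). pair_tup m y y')
     (bind_pmf (outp C1 x) (\<lambda>y. map_pmf (Pair y) (outp C2 (map_tup m g y))))"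

lemma ker_pair_ch_eq_pmf:
  assumes C1: "wf_chan m C1" and C2: "wf_chan m C2"
    and g: "\<forall>i<m. \<forall>a\<in>outA C1 i. g i a \<in> inA C2 i" and x: "x \<in> tup m (inA C1)"
  shows "ker (pair_ch m C1 g C2) x = pmf (pair_outp m C1 g C2 x)"
proof
  fix yy
  let ?A = "tup m (outA C1) \<times> tup m (outA C2)"
  let ?J = "bind_pmf (outp C1 x) (\<lambda>y. map_pmf (Pair y) (outp C2 (map_tup m g y)))"
  have gy: "map_tup m g y \<in> tup m (inA C2)" if "y \<in> tup m (outA C1)" for y
    using g that by (rule map_tup_in_tup)
  have J: "set_pmf ?J \<subseteq> ?A"
    using set_pmf_outp[OF C1 x] set_pmf_outp[OF C2 gy] by auto
  have inj: "inj_on (\<lambda>(y, y'). pair_tup m y y') ?A"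
    by (rule inj_on_pair_tup)
  show "ker (pair_ch m C1 g C2) x yy = pmf (pair_outp m C1 g C2 x) yy"
  proof (cases "yy \<in> tup m (pair_alph m (outA C1) (outA C2))")
    case True
    define y0 y0' where "y0 = pair_fst m yy" and "y0' = pair_snd m yy"
    have y0: "y0 \<in> tup m (outA C1)" "y0' \<in> tup m (outA C2)"
      unfolding y0_def y0'_def by (rule pair_tup_split[OF True])+
    have "pmf (pair_outp m C1 g C2 x) yy = pmf ?J (y0, y0')"
      using pmf_map_inj_on[OF inj J, of "(y0, y0')"] y0 pair_tup_split(3)[OF True]
      by (simp add: pair_outp_def y0_def y0'_def)
    also have "\<dots> = ker C1 x y0 * ker C2 (map_tup m g y0) y0'"
      by (simp add: pmf_bind_map_Pair pmf_outp[OF C1 x] pmf_outp[OF C2 gy[OF y0(1)]])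
    finally show ?thesis
      using True x by (simp add: ker_pair_ch y0_def y0'_def)
  next
    case False
    have "yy \<notin> (\<lambda>(y, y'). pair_tup m y y') ` set_pmf ?J"
    proof
      assume "yy \<in> (\<lambda>(y, y'). pair_tup m y y') ` set_pmf ?J"
      then obtain y y' where "(y, y') \<in> set_pmf ?J" and yy: "yy = pair_tup m y y'"
        by auto
      then have "y \<in> tup m (outA C1)" "y' \<in> tup m (outA C2)"
        using J by auto
      then show False
        using False unfolding yy by (simp add: pair_tup_in_tup)
    qed
    then have "pmf (pair_outp m C1 g C2 x) yy = 0"
      unfolding pair_outp_def by (rule pmf_map_outside)
    then show ?thesis
      using False by (simp add: ker_pair_ch)
  qed
qed

lemma wf_pair_ch:
  assumes C1: "wf_chan m C1" and C2: "wf_chan m C2"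
    and g: "\<forall>i<m. \<forall>a\<in>outA C1 i. g i a \<in> inA C2 i"
  shows "wf_chan m (pair_ch m C1 g C2)"
  using wf_chanD(1,2)[OF C1] wf_chanD(2)[OF C2]
  by (intro wf_chan_pmfI[where p = "pair_outp m C1 g C2"] ker_pair_ch_eq_pmf[OF C1 C2 g])
    (auto simp: alph_pair_alph ker_pair_ch split: if_splits)

lemma outp_pair_ch:
  assumes "wf_chan m C1" "wf_chan m C2"
    and "\<forall>i<m. \<forall>a\<in>outA C1 i. g i a \<in> inA C2 i" and "x \<in> tup m (inA C1)"
  shows "outp (pair_ch m C1 g C2) x = pair_outp m C1 g C2 x"
  using assms by (intro outp_eq_pmf ker_pair_ch_eq_pmf)

lemma alph_blk:
  assumes A: "alph m A"
  shows "alph m (blk m A n)"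
proof -
  have "blk m A n i = SList ` {l. set l \<subseteq> A i \<and> length l = n}" if "i < m" for i
    using that unfolding blk_def by auto
  then have fin: "finite (blk m A n i)" if "i < m" for i
    using A that by (simp add: alph_def finite_lists_length_eq)
  have ne: "blk m A n i \<noteq> {}" if i: "i < m" for i
  proof -
    obtain a where "a \<in> A i"
      using A i unfolding alph_def by blast
    then have "SList (replicate n a) \<in> blk m A n i"
      using i unfolding blk_def by auto
    then show ?thesis
      by blast
  qed
  show ?thesis
    using fin ne unfolding alph_def by (simp add: blk_def)
qed

lemma set_iid_pmf: "ws \<in> set_pmf (iid_pmf p n) \<Longrightarrow> length ws = n \<and> set ws \<subseteq> set_pmf p"
  by (induction n arbitrary: ws) fastforce+

lemma inblock_in_tup:
  assumes "set ws \<subseteq> tup m W" and "length ws = n"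
  shows "inblock m ws \<in> tup m (blk m W n)"
proof -
  have "w i \<in> W i" if "i < m" "w \<in> set ws" for i w
    using assms(1) that by (blast intro: tupD)
  then show ?thesis
    unfolding inblock_def blk_def using assms(2) by (auto intro!: restrict_in_tup)
qed

lemma dist_on_block_src: "dist_on m W pW \<Longrightarrow> dist_on m (blk m W n) (block_src m pW n)"
  unfolding dist_on_def block_src_def
  by (auto dest!: set_iid_pmf intro!: inblock_in_tup)

lemma length_unblock [simp]: "length (unblock m n x) = n"
  by (simp add: unblock_def)

lemma blk_tupE:
  assumes "x \<in> tup m (blk m W n)" and "i < m"
  obtains l where "x i = SList l" "l \<in> lists (W i)" "length l = n"
  using tupD[OF assms] assms(2) unfolding blk_def by auto

lemma set_unblock_subset:
  assumes x: "x \<in> tup m (blk m W n)"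
  shows "set (unblock m n x) \<subseteq> tup m W"
proof
  fix w
  assume "w \<in> set (unblock m n x)"
  then obtain t where t: "t < n" and w: "w = restrict (\<lambda>i. unSList (x i) ! t) {..<m}"
    by (auto simp: unblock_def)
  have "unSList (x i) ! t \<in> W i" if "i < m" for i
  proof (rule blk_tupE[OF x that])
    fix l
    assume "x i = SList l" "l \<in> lists (W i)" "length l = n"
    then show ?thesis
      using t by auto
  qed
  then show "w \<in> tup m W"
    unfolding w by (rule restrict_in_tup)
qed

lemma inblock_unblock:
  assumes x: "x \<in> tup m (blk m W n)"
  shows "inblock m (unblock m n x) = x"
proof (rule tup_eqI[OF _ x, of _ "\<lambda>_. UNIV"])
  show "inblock m (unblock m n x) \<in> tup m (\<lambda>_. UNIV)"
    unfolding inblock_def by (rule restrict_in_tup) simp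
  fix i
  assume "i < m"
  then obtain l where l: "x i = SList l" "length l = n"
    by (rule blk_tupE[OF x])
  then show "inblock m (unblock m n x) i = x i"
    using \<open>i < m\<close> by (simp add: inblock_def unblock_def comp_def map_nth flip: l(2))
qed

subsection \<open>The history channel of a code\<close>

text \<open>After k uses of the network, node i keeps its history (w, y_1, ..., y_k) as the single
  symbol SPair (... (SPair (SList w) y_1) ...) y_k (see hist_code), which decode_hist k unpacks.\<close>

fun decode_hist :: "nat \<Rightarrow> sym \<Rightarrow> sym list \<times> sym list" where
  "decode_hist 0 s = (unSList s, [])"
| "decode_hist (Suc k) s = (fst (decode_hist k (sfst s)), snd (decode_hist k (sfst s)) @ [ssnd s])"

lemma decode_hist_foldl: "length ys = k \<Longrightarrow> decode_hist k (foldl SPair (SList w) ys) = (w, ys)"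
  by (induction ys arbitrary: k rule: rev_induct) auto

definition hist_code :: "nat \<Rightarrow> (nat \<Rightarrow> sym) list \<Rightarrow> (nat \<Rightarrow> sym) list \<Rightarrow> nat \<Rightarrow> sym" where
  "hist_code m ws ys = restrict (\<lambda>i. foldl SPair (SList (map (\<lambda>w. w i) ws)) (map (\<lambda>y. y i) ys)) {..<m}"

definition encoder_at :: "(nat \<Rightarrow> nat \<Rightarrow> sym list \<Rightarrow> sym list \<Rightarrow> sym) \<Rightarrow> nat \<Rightarrow> nat \<Rightarrow> sym \<Rightarrow> sym" where
  "encoder_at \<zeta> k i s = \<zeta> i k (fst (decode_hist k s)) (snd (decode_hist k s))"

fun hist_ch :: "nat \<Rightarrow> chan \<Rightarrow> (nat \<Rightarrow> sym set) \<Rightarrow> nat \<Rightarrow> (nat \<Rightarrow> nat \<Rightarrow> sym list \<Rightarrow> sym list \<Rightarrow> sym)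
    \<Rightarrow> nat \<Rightarrow> chan" where
  "hist_ch m N W n \<zeta> 0 = id_ch m (blk m W n)"
| "hist_ch m N W n \<zeta> (Suc k) = pair_ch m (hist_ch m N W n \<zeta> k) (encoder_at \<zeta> k) N"

lemma inA_hist_ch [simp]: "inA (hist_ch m N W n \<zeta> k) = blk m W n"
  by (induction k) (simp_all add: id_ch_def)

lemma decode_hist_outA_hist_ch:
  assumes "i < m" and "s \<in> outA (hist_ch m N W n \<zeta> k) i"
  shows "fst (decode_hist k s) \<in> lists (W i) \<and> length (fst (decode_hist k s)) = n \<and>
    snd (decode_hist k s) \<in> lists (outA N i) \<and> length (snd (decode_hist k s)) = k"
  using assms(2)
proof (induction k arbitrary: s)
  case 0
  then show ?case
    using assms(1) by (auto simp: id_ch_def blk_def)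
next
  case (Suc k)
  then obtain a b where "s = SPair a b" "a \<in> outA (hist_ch m N W n \<zeta> k) i" "b \<in> outA N i"
    using assms(1) by (auto simp: pair_alph_def)
  then show ?case
    using Suc.IH[of a] by simp
qed

lemma encoder_at_in_inA:
  assumes "enc_valid m N W n \<zeta>" and "k < n"
  shows "\<forall>i<m. \<forall>s\<in>outA (hist_ch m N W n \<zeta> k) i. encoder_at \<zeta> k i s \<in> inA N i"
proof (intro allI impI ballI)
  fix i s
  assume "i < m" and "s \<in> outA (hist_ch m N W n \<zeta> k) i"
  with assms decode_hist_outA_hist_ch[OF this] show "encoder_at \<zeta> k i s \<in> inA N i"
    unfolding enc_valid_def encoder_at_def by blast
qed

lemma wf_hist_ch:
  assumes N: "wf_chan m N" and W: "alph m W" and enc: "enc_valid m N W n \<zeta>"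
  shows "k \<le> n \<Longrightarrow> wf_chan m (hist_ch m N W n \<zeta> k)"
proof (induction k)
  case 0
  then show ?case
    using W by (simp add: wf_id_ch alph_blk)
next
  case (Suc k)
  then show ?case
    using wf_pair_ch[OF _ N encoder_at_in_inA[OF enc]] by simp
qed

lemma length_run: "ys \<in> set_pmf (run m N \<zeta> ws k) \<Longrightarrow> length ys = k"
  by (induction k arbitrary: ys) auto

lemma hist_code_Nil: "hist_code m ws [] = inblock m ws"
  by (simp add: hist_code_def inblock_def)

lemma hist_code_snoc: "hist_code m ws (ys @ [y]) = pair_tup m (hist_code m ws ys) y"
  by (simp add: hist_code_def pair_tup_def fun_eq_iff)

lemma map_tup_encoder_at_hist_code:
  "length ys = k \<Longrightarrow> map_tup m (encoder_at \<zeta> k) (hist_code m ws ys) = xin m \<zeta> ws ys"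
  by (simp add: map_tup_def hist_code_def encoder_at_def xin_def decode_hist_foldl fun_eq_iff)

lemma outp_hist_ch:
  assumes N: "wf_chan m N" and W: "alph m W" and enc: "enc_valid m N W n \<zeta>"
    and ws: "set ws \<subseteq> tup m W" "length ws = n"
  shows "k \<le> n \<Longrightarrow> outp (hist_ch m N W n \<zeta> k) (inblock m ws) = map_pmf (hist_code m ws) (run m N \<zeta> ws k)"
proof (induction k)
  case 0
  then show ?case
    by (simp add: outp_id_ch inblock_in_tup[OF ws] hist_code_Nil)
next
  case (Suc k)
  let ?C = "hist_ch m N W n \<zeta> k"
  have k: "k < n"
    using Suc.prems by simp
  have "outp (hist_ch m N W n \<zeta> (Suc k)) (inblock m ws) = pair_outp m ?C (encoder_at \<zeta> k) N (inblock m ws)"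
    using inblock_in_tup[OF ws] k
    by (simp add: outp_pair_ch[OF wf_hist_ch[OF N W enc] N encoder_at_in_inA[OF enc k]])
  also have "\<dots> = bind_pmf (run m N \<zeta> ws k)
      (\<lambda>ys. map_pmf (\<lambda>y. hist_code m ws (ys @ [y])) (outp N (xin m \<zeta> ws ys)))"
    unfolding pair_outp_def Suc.IH[OF less_imp_le[OF k]] map_bind_pmf bind_map_pmf map_pmf_comp
    by (intro bind_pmf_cong refl map_pmf_cong)
      (simp_all add: hist_code_snoc map_tup_encoder_at_hist_code length_run)
  also have "\<dots> = map_pmf (hist_code m ws) (run m N \<zeta> ws (Suc k))"
    by (simp add: map_bind_pmf map_pmf_comp)
  finally show ?case .
qed

lemma induced_hist_ch:
  assumes N: "wf_chan m N" and W: "alph m W" and pW: "dist_on m W pW"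
    and enc: "enc_valid m N W n \<zeta>" and k: "k < n"
  shows "induced m (hist_ch m N W n \<zeta> k) (encoder_at \<zeta> k) (block_src m pW n) = input_dist m N pW n \<zeta> k"
proof -
  have "induced m (hist_ch m N W n \<zeta> k) (encoder_at \<zeta> k) (block_src m pW n)
      = bind_pmf (iid_pmf pW n)
          (\<lambda>ws. map_pmf (map_tup m (encoder_at \<zeta> k)) (outp (hist_ch m N W n \<zeta> k) (inblock m ws)))"
    unfolding induced_def block_src_def bind_map_pmf map_tup_def ..
  also have "\<dots> = bind_pmf (iid_pmf pW n) (\<lambda>ws. map_pmf (xin m \<zeta> ws) (run m N \<zeta> ws k))"
  proof (intro bind_pmf_cong refl)
    fix ws
    assume "ws \<in> set_pmf (iid_pmf pW n)"
    then have ws: "set ws \<subseteq> tup m W" "length ws = n"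
      using set_iid_pmf pW unfolding dist_on_def by blast+
    show "map_pmf (map_tup m (encoder_at \<zeta> k)) (outp (hist_ch m N W n \<zeta> k) (inblock m ws))
        = map_pmf (xin m \<zeta> ws) (run m N \<zeta> ws k)"
      unfolding outp_hist_ch[OF N W enc ws less_imp_le[OF k]] map_pmf_comp
      by (intro map_pmf_cong refl) (simp add: map_tup_encoder_at_hist_code length_run)
  qed
  also have "\<dots> = input_dist m N pW n \<zeta> k"
    unfolding input_dist_def joint_def map_bind_pmf map_pmf_comp by simp
  finally show ?thesis .
qed

subsection \<open>Decoding as a post-processing of the history channel\<close>

definition decoder_ker :: "(nat \<Rightarrow> sym list \<Rightarrow> sym list \<Rightarrow> sym list) \<Rightarrow> nat \<Rightarrow> nat \<Rightarrow> sym \<Rightarrow> sym \<Rightarrow> real" where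
  "decoder_ker \<theta> n i s z = (if z = SList (\<theta> i (fst (decode_hist n s)) (snd (decode_hist n s))) then 1 else 0)"

lemma local_chans_decoder_ker:
  assumes M: "alph m M" and dec: "dec_valid m N W M n \<theta>"
  shows "local_chans m (outA (hist_ch m N W n \<zeta> n)) (blk m M n) (decoder_ker \<theta> n)"
  unfolding local_chans_def
proof (intro allI impI ballI conjI)
  fix i s z
  show "0 \<le> decoder_ker \<theta> n i s z"
    by (simp add: decoder_ker_def)
next
  fix i s
  assume i: "i < m" and s: "s \<in> outA (hist_ch m N W n \<zeta> n) i"
  have "SList (\<theta> i (fst (decode_hist n s)) (snd (decode_hist n s))) \<in> blk m M n i"
    using dec decode_hist_outA_hist_ch[OF i s] i unfolding dec_valid_def blk_def by auto
  moreover have "finite (blk m M n i)"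
    using alph_blk[OF M] i unfolding alph_def by simp
  ultimately show "(\<Sum>z\<in>blk m M n i. decoder_ker \<theta> n i s z) = 1"
    unfolding decoder_ker_def by simp
qed

lemma prod_decoder_ker_hist_code:
  assumes "length ys = n" and z: "z \<in> tup m Z"
  shows "(\<Prod>i<m. decoder_ker \<theta> n i (hist_code m ws ys i) (z i)) = indicator (outblock m \<theta> ws -` {z}) ys"
proof -
  let ?P = "\<lambda>i. z i = SList (\<theta> i (map (\<lambda>w. w i) ws) (map (\<lambda>y. y i) ys))"
  have "(\<Prod>i<m. decoder_ker \<theta> n i (hist_code m ws ys i) (z i)) = (\<Prod>i<m. if ?P i then 1 else 0)"
    using assms(1) by (intro prod.cong) (simp_all add: decoder_ker_def hist_code_def decode_hist_foldl)
  also have "\<dots> = (if \<forall>i<m. ?P i then 1 else 0)"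
    by (induction m) (auto simp: less_Suc_eq)
  also have "(\<forall>i<m. ?P i) \<longleftrightarrow> outblock m \<theta> ws ys = z"
  proof
    assume "\<forall>i<m. ?P i"
    moreover have "outblock m \<theta> ws ys \<in> tup m (\<lambda>_. UNIV)"
      unfolding outblock_def by (rule restrict_in_tup) simp
    ultimately show "outblock m \<theta> ws ys = z"
      by (intro tup_eqI[OF _ z]) (auto simp: outblock_def)
  qed (auto simp: outblock_def)
  finally show ?thesis
    by (simp add: indicator_def)
qed

lemma pmf_block_row:
  assumes N: "wf_chan m N" and W: "alph m W" and enc: "enc_valid m N W n \<zeta>"
    and x: "x \<in> tup m (blk m W n)" and z: "z \<in> tup m (blk m M n)"
  shows "pmf (map_pmf (outblock m \<theta> (unblock m n x)) (run m N \<zeta> (unblock m n x) n)) z =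
    (\<Sum>y\<in>tup m (outA (hist_ch m N W n \<zeta> n)).
      ker (hist_ch m N W n \<zeta> n) x y * (\<Prod>i<m. decoder_ker \<theta> n i (y i) (z i)))"
    (is "_ = (\<Sum>y\<in>_. _ * ?h y)")
proof -
  let ?ws = "unblock m n x"
  have "(\<Sum>y\<in>tup m (outA (hist_ch m N W n \<zeta> n)). ker (hist_ch m N W n \<zeta> n) x y * ?h y)
      = measure_pmf.expectation (outp (hist_ch m N W n \<zeta> n) (inblock m ?ws)) ?h"
    using x by (simp add: sum_ker_eq_expectation wf_hist_ch[OF N W enc] inblock_unblock)
  also have "\<dots> = measure_pmf.expectation (run m N \<zeta> ?ws n) (\<lambda>ys. ?h (hist_code m ?ws ys))"
    using set_unblock_subset[OF x] by (simp add: outp_hist_ch[OF N W enc])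
  also have "\<dots> = measure_pmf.expectation (run m N \<zeta> ?ws n) (indicator (outblock m \<theta> ?ws -` {z}))"
    using z by (intro integral_cong_AE) (auto simp: AE_measure_pmf_iff length_run prod_decoder_ker_hist_code)
  also have "\<dots> = pmf (map_pmf (outblock m \<theta> ?ws) (run m N \<zeta> ?ws n)) z"
    by (simp add: pmf_map)
  finally show ?thesis ..
qed

lemma block_ch_eq_post_ch:
  assumes "wf_chan m N" and "alph m W" and "enc_valid m N W n \<zeta>"
  shows "block_ch m N W M n \<zeta> \<theta> = post_ch m (hist_ch m N W n \<zeta> n) (blk m M n) (decoder_ker \<theta> n)"
  unfolding block_ch_def post_ch_def by (auto simp: fun_eq_iff intro!: pmf_block_row[OF assms])

lemma msum_mono: "A \<subseteq> A' \<Longrightarrow> B \<subseteq> B' \<Longrightarrow> msum A B \<subseteq> msum A' B'"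
  unfolding msum_def by blast

lemma msum_scaled_hull_subset:
  fixes K :: "'a::real_vector set"
  shows "msum (rtimes (real k) (convex hull K)) K \<subseteq> rtimes (real (Suc k)) (convex hull K)"
proof
  fix v
  assume "v \<in> msum (rtimes (real k) (convex hull K)) K"
  then obtain u w where u: "u \<in> convex hull K" and w: "w \<in> K" and v: "v = real k *\<^sub>R u + w"
    unfolding msum_def rtimes_def by blast
  define d where "d = real (Suc k)"
  have d: "0 < d"
    by (simp add: d_def)
  have "(real k / d) *\<^sub>R u + (1 / d) *\<^sub>R w \<in> convex hull K"
    using d by (intro convexD[OF convex_convex_hull u hull_inc[OF w]]) (auto simp: d_def field_simps)
  moreover have "v = d *\<^sub>R ((real k / d) *\<^sub>R u + (1 / d) *\<^sub>R w)"
    using d by (simp add: v scaleR_add_right)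
  ultimately show "v \<in> rtimes (real (Suc k)) (convex hull K)"
    unfolding rtimes_def d_def by blast
qed

lemma iterated_msum_subset_scaled_hull:
  fixes S :: "nat \<Rightarrow> 'a::real_vector set"
  assumes S0: "S 0 \<subseteq> {0}" and step: "\<And>k. k < n \<Longrightarrow> S (Suc k) \<subseteq> msum (S k) K" and "0 < n"
  shows "S n \<subseteq> rtimes (real n) (convex hull K)"
proof -
  have "S (Suc k) \<subseteq> rtimes (real (Suc k)) (convex hull K)" if "Suc k \<le> n" for k
    using that
  proof (induction k)
    case 0
    have "S 1 \<subseteq> msum (S 0) K"
      using step[of 0] 0 by simp
    also have "\<dots> \<subseteq> msum {0} K"
      using S0 by (rule msum_mono) simp
    also have "\<dots> \<subseteq> convex hull K"
      by (auto simp: msum_def hull_inc)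
    finally show ?case
      by (simp add: rtimes_def)
  next
    case (Suc k)
    have "S (Suc (Suc k)) \<subseteq> msum (S (Suc k)) K"
      using step[of "Suc k"] Suc.prems by simp
    also have "\<dots> \<subseteq> msum (rtimes (real (Suc k)) (convex hull K)) K"
      using Suc by (intro msum_mono) simp_all
    also have "\<dots> \<subseteq> rtimes (real (Suc (Suc k))) (convex hull K)"
      by (rule msum_scaled_hull_subset)
    finally show ?case .
  qed
  then show ?thesis
    using \<open>0 < n\<close> by (metis Suc_pred order_refl)
qed

theorem lemma1:
  fixes \<phi> :: "chan \<Rightarrow> (nat \<Rightarrow> sym) pmf set \<Rightarrow> (real ^ 'c) set"
    and m :: nat
  assumes nonneg: "\<And>C \<Psi>. wf_chan m C \<Longrightarrow> (\<forall>q\<in>\<Psi>. dist_on m (inA C) q) \<Longrightarrow>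
                       \<phi> C \<Psi> \<subseteq> {v. \<forall>j. 0 \<le> v $ j}"
    and P1: "\<And>C1 C2 g q \<Psi>. wf_chan m C1 \<Longrightarrow> wf_chan m C2 \<Longrightarrow>
               (\<forall>i<m. \<forall>y\<in>outA C1 i. g i y \<in> inA C2 i) \<Longrightarrow>
               dist_on m (inA C1) q \<Longrightarrow> (\<forall>q'\<in>\<Psi>. dist_on m (inA C2) q') \<Longrightarrow>
               induced m C1 g q \<in> \<Psi> \<Longrightarrow>
               \<phi> (pair_ch m C1 g C2) {q} \<subseteq> msum (\<phi> C1 {q}) (\<phi> C2 \<Psi>)"
    and P2: "\<And>A q. alph m A \<Longrightarrow> dist_on m A q \<Longrightarrow> \<phi> (id_ch m A) {q} = {0}"
    and P3: "\<And>C Z T q. wf_chan m C \<Longrightarrow> alph m Z \<Longrightarrow> local_chans m (outA C) Z T \<Longrightarrow>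
               dist_on m (inA C) q \<Longrightarrow> \<phi> (post_ch m C Z T) {q} \<subseteq> \<phi> C {q}"
    and N: "wf_chan m N"
    and W: "alph m W" and pW: "dist_on m W pW"
    and M: "alph m M" and f: "\<forall>i<m. \<forall>w\<in>tup m W. f i w \<in> M i"
    and Delta: "\<forall>i<m. \<forall>a\<in>M i. \<Delta> i a a = 0"
    and eps: "\<epsilon> > 0"
    and enc: "enc_valid m N W n \<zeta>" and dec: "dec_valid m N W M n \<theta>"
    and dist: "\<forall>i<m. exp_dist m N pW n \<zeta> \<theta> f \<Delta> i \<le> D i + \<epsilon>"
    and perm: "permissible m N W pW \<Psi>"
  shows "\<phi> (block_ch m N W M n \<zeta> \<theta>) {block_src m pW n}
           \<subseteq> rtimes (real n) (convex hull (\<phi> N \<Psi>))"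
proof -
  let ?q = "block_src m pW n"
  let ?S = "\<lambda>k. \<phi> (hist_ch m N W n \<zeta> k) {?q}"
  have q: "dist_on m (blk m W n) ?q"
    using pW by (rule dist_on_block_src)
  have "?S (Suc k) \<subseteq> msum (?S k) (\<phi> N \<Psi>)" if k: "k < n" for k
  proof -
    have "induced m (hist_ch m N W n \<zeta> k) (encoder_at \<zeta> k) ?q \<in> \<Psi>"
      using perm enc k unfolding induced_hist_ch[OF N W pW enc k] permissible_def by blast
    then show ?thesis
      using perm q k
      by (simp add: P1[OF wf_hist_ch[OF N W enc] N encoder_at_in_inA[OF enc k]] permissible_def)
  qed
  moreover have "?S 0 \<subseteq> {0}"
    using P2[OF alph_blk[OF W] q] by simp
  ultimately have "?S n \<subseteq> rtimes (real n) (convex hull (\<phi> N \<Psi>))"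
    using enc unfolding enc_valid_def by (intro iterated_msum_subset_scaled_hull) auto
  moreover have "\<phi> (block_ch m N W M n \<zeta> \<theta>) {?q} \<subseteq> ?S n"
    unfolding block_ch_eq_post_ch[OF N W enc] using q
    by (intro P3 wf_hist_ch[OF N W enc] alph_blk[OF M] local_chans_decoder_ker[OF M dec]) simp_all
  ultimately show ?thesis
    by blast
qed

end
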